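(* Let $m,n\ge 2$ and let $G$ be the ordered graph with vertices $v_1<\dots<v_{m+n}$ whose only edges are $v_1v_{m+1}$ and $v_mv_{m+n}$ (two crossing edges: one joining the first vertices and one joining the last vertices of the parts $\{v_1,\dots,v_m\}$ and $\{v_{m+1},\dots,v_{m+n}\}$). Then $R(G)=m+n+\max(m,n)-1$.
   Context: An ordered graph is a graph together with a specified linear ordering of its vertex set. An ordered graph $G$ is contained in an ordered graph $H$ if there is an order-preserving injection $V(G)\to V(H)$ mapping edges to edges. $R(G)$ denotes the 2-color ordered Ramsey number: the minimum $N$ such that every 2-coloring of the edges of the ordered complete graph on $N$ vertices contains a monochromatic copy of $G$. *)

theory Defs
  imports Main
begin

definition ordered_graph :: "nat \<Rightarrow> nat set set \<Rightarrow> bool" where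
  "ordered_graph k E \<longleftrightarrow> (\<forall>e\<in>E. \<exists>i j. i < j \<and> j < k \<and> e = {i, j})"

definition mono_copy :: "nat \<Rightarrow> (nat set \<Rightarrow> bool) \<Rightarrow> bool \<Rightarrow> nat \<Rightarrow> nat set set \<Rightarrow> bool" where
  "mono_copy N col c k E \<longleftrightarrow>
     (\<exists>f. strict_mono_on {0..<k} f \<and> f ` {0..<k} \<subseteq> {0..<N} \<and>
          (\<forall>e\<in>E. col (f ` e) = c))"

definition ramsey_arrows :: "nat \<Rightarrow> nat \<Rightarrow> nat set set \<Rightarrow> bool" where
  "ramsey_arrows N k E \<longleftrightarrow> (\<forall>col. \<exists>c. mono_copy N col c k E)"

definition ord_ramsey :: "nat \<Rightarrow> nat set set \<Rightarrow> nat" where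
  "ord_ramsey k E = (LEAST N. ramsey_arrows N k E)"

end

theory Submission
  imports Defs
begin

text \<open>A copy of the two crossing edges is determined by the images x < z of the first edge and
  y < w of the second, subject only to the room needed for the remaining vertices:
  x + m - 1 \<le> y < z and z + n - 1 \<le> w. For the upper bound, five such edges of K_N
  form a 5-cycle in which consecutive edges together span a copy; an odd cycle cannot be
  2-coloured alternately, so two consecutive edges agree in colour. For the lower bound,
  colour an edge by whether its left end lies among the first m - 1 vertices (if n \<le> m), or
  by whether its right end lies among the last n - 1 vertices (if m < n).\<close>

definition crossing_edges :: "nat \<Rightarrow> nat \<Rightarrow> nat set set" where
  "crossing_edges m n = {{0, m}, {m - 1, m + n - 1}}"

lemma strict_mono_on_atLeastLessThan_gap:
  fixes f :: "nat \<Rightarrow> nat"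
  assumes "strict_mono_on {0..<k} f" "i \<le> j" "j < k"
  shows "f i + (j - i) \<le> f j"
  using assms(2,3)
proof (induction j)
  case 0
  then show ?case by simp
next
  case (Suc j)
  show ?case
  proof (cases "i = Suc j")
    case False
    then have "f i + (j - i) \<le> f j" using Suc by simp
    moreover have "f j < f (Suc j)"
      using strict_mono_onD[OF assms(1)] Suc.prems by simp
    ultimately show ?thesis using False Suc.prems by linarith
  qed simp
qed

lemma mono_copy_crossing_iff:
  assumes "1 < m" "1 < n"
  shows "mono_copy N col c (m + n) (crossing_edges m n) \<longleftrightarrow>
    (\<exists>x y z w. x + m - 1 \<le> y \<and> y < z \<and> z + n - 1 \<le> w \<and> w < N \<and>
      col {x, z} = c \<and> col {y, w} = c)"
    (is "?copy \<longleftrightarrow> ?pair")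
proof
  assume ?copy
  then obtain f where f: "strict_mono_on {0..<m + n} f" "f ` {0..<m + n} \<subseteq> {0..<N}"
    "\<forall>e\<in>crossing_edges m n. col (f ` e) = c"
    unfolding mono_copy_def by blast
  have "f 0 + (m - 1) \<le> f (m - 1)" "f m + (n - 1) \<le> f (m + n - 1)"
    using strict_mono_on_atLeastLessThan_gap[OF f(1), of 0 "m - 1"]
      strict_mono_on_atLeastLessThan_gap[OF f(1), of m "m + n - 1"] assms by simp_all
  moreover have "f (m - 1) < f m"
    using strict_mono_onD[OF f(1)] assms by simp
  moreover have "f (m + n - 1) < N"
  proof -
    have "m + n - 1 \<in> {0..<m + n}" using assms by simp
    then have "f (m + n - 1) \<in> {0..<N}" using f(2) by blast
    then show ?thesis by simp
  qed
  moreover have "col {f 0, f m} = c" "col {f (m - 1), f (m + n - 1)} = c"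
    using f(3) by (auto simp: crossing_edges_def)
  ultimately show ?pair
    using assms by (intro exI[of _ "f 0"] exI[of _ "f (m - 1)"] exI[of _ "f m"]
        exI[of _ "f (m + n - 1)"]) auto
next
  assume ?pair
  then obtain x y z w where xyzw: "x + m - 1 \<le> y" "y < z" "z + n - 1 \<le> w" "w < N"
    "col {x, z} = c" "col {y, w} = c"
    by blast
  define f where "f i =
    (if i < m - 1 then x + i else if i = m - 1 then y else if i < m + n - 1 then z + (i - m) else w)"
    for i
  have "strict_mono_on {0..<m + n} f" "f ` {0..<m + n} \<subseteq> {0..<N}"
    unfolding strict_mono_on_def f_def using assms xyzw by auto
  moreover have "f ` {0, m} = {x, z}" "f ` {m - 1, m + n - 1} = {y, w}"
    unfolding f_def using assms by auto
  ultimately show ?copy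
    unfolding mono_copy_def crossing_edges_def using xyzw by (intro exI[of _ f]) auto
qed

lemma crossing_arrows:
  assumes "1 < m" "1 < n"
  shows "ramsey_arrows (m + n + max m n - 1) (m + n) (crossing_edges m n)"
  unfolding ramsey_arrows_def
proof
  fix col :: "nat set \<Rightarrow> bool"
  define M where "M = max m n"
  define N where "N = m + n + M - 1"
  have bounds: "m \<le> M" "n \<le> M" "1 < m" "1 < n" unfolding M_def using assms by auto
  have pair: "\<exists>c. mono_copy N col c (m + n) (crossing_edges m n)"
    if "x + m - 1 \<le> y" "y < z" "z + n - 1 \<le> w" "w < N" "col {x, z} = col {y, w}"
    for x y z w
    using that unfolding mono_copy_crossing_iff[OF assms] by blast
  have "col {0, m} = col {m - 1, m + M - 1} \<or> col {m - 1, m + M - 1} = col {m + M - 2, N - 1}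
      \<or> col {m + M - 2, N - 1} = col {0, m + M - 1} \<or> col {0, m + M - 1} = col {m - 1, N - 1}
      \<or> col {m - 1, N - 1} = col {0, m}"
    by blast
  then have "\<exists>c. mono_copy N col c (m + n) (crossing_edges m n)"
  proof (elim disjE)
    assume "col {0, m} = col {m - 1, m + M - 1}"
    then show ?thesis
      by (intro pair[of 0 "m - 1" m "m + M - 1"])
        (use bounds in \<open>auto simp: N_def\<close>)
  next
    assume "col {m - 1, m + M - 1} = col {m + M - 2, N - 1}"
    then show ?thesis
      by (intro pair[of "m - 1" "m + M - 2" "m + M - 1" "N - 1"])
        (use bounds in \<open>auto simp: N_def\<close>)
  next
    assume "col {m + M - 2, N - 1} = col {0, m + M - 1}"
    then show ?thesis
      by (intro pair[of 0 "m + M - 2" "m + M - 1" "N - 1"])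
        (use bounds in \<open>auto simp: N_def\<close>)
  next
    assume "col {0, m + M - 1} = col {m - 1, N - 1}"
    then show ?thesis
      by (intro pair[of 0 "m - 1" "m + M - 1" "N - 1"])
        (use bounds in \<open>auto simp: N_def\<close>)
  next
    assume "col {m - 1, N - 1} = col {0, m}"
    then show ?thesis
      by (intro pair[of 0 "m - 1" m "N - 1"])
        (use bounds in \<open>auto simp: N_def\<close>)
  qed
  then show "\<exists>c. mono_copy (m + n + max m n - 1) col c (m + n) (crossing_edges m n)"
    unfolding N_def M_def .
qed

lemma no_crossing_copy_left_colouring:
  assumes "1 < m" "1 < n" "N \<le> 2 * m + n - 2"
  shows "\<not> mono_copy N (\<lambda>e. Min e < m - 1) c (m + n) (crossing_edges m n)"
proof
  assume "mono_copy N (\<lambda>e. Min e < m - 1) c (m + n) (crossing_edges m n)"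
  then obtain x y z w where xyzw: "x + m - 1 \<le> y" "y < z" "z + n - 1 \<le> w" "w < N"
    "(Min {x, z} < m - 1) = c" "(Min {y, w} < m - 1) = c"
    unfolding mono_copy_crossing_iff[OF assms(1,2)] by blast
  moreover have "Min {x, z} = x" "Min {y, w} = y"
    using xyzw assms by auto
  ultimately have "(x < m - 1) = (y < m - 1)"
    by simp
  then show False
    using xyzw assms by auto
qed

lemma no_crossing_copy_right_colouring:
  assumes "1 < m" "1 < n" "N \<le> m + 2 * n - 2"
  shows "\<not> mono_copy N (\<lambda>e. N < Max e + n) c (m + n) (crossing_edges m n)"
proof
  assume "mono_copy N (\<lambda>e. N < Max e + n) c (m + n) (crossing_edges m n)"
  then obtain x y z w where xyzw: "x + m - 1 \<le> y" "y < z" "z + n - 1 \<le> w" "w < N"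
    "(N < Max {x, z} + n) = c" "(N < Max {y, w} + n) = c"
    unfolding mono_copy_crossing_iff[OF assms(1,2)] by blast
  moreover have "Max {x, z} = z" "Max {y, w} = w"
    using xyzw assms by auto
  ultimately have "(N < z + n) = (N < w + n)"
    by simp
  then show False
    using xyzw assms by auto
qed

lemma not_crossing_arrows:
  assumes "1 < m" "1 < n"
  shows "\<not> ramsey_arrows (m + n + max m n - 2) (m + n) (crossing_edges m n)"
proof (cases "n \<le> m")
  case True
  then have "\<not> mono_copy (m + n + max m n - 2) (\<lambda>e. Min e < m - 1) c (m + n) (crossing_edges m n)"
    for c
    by (intro no_crossing_copy_left_colouring assms) simp
  then show ?thesis
    unfolding ramsey_arrows_def by blast
next
  case False
  then have "\<not> mono_copy (m + n + max m n - 2) (\<lambda>e. m + n + max m n - 2 < Max e + n) c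
      (m + n) (crossing_edges m n)" for c
    by (intro no_crossing_copy_right_colouring assms) simp
  then show ?thesis
    unfolding ramsey_arrows_def by blast
qed

lemma ramsey_arrows_mono:
  assumes "ramsey_arrows N k E" "N \<le> N'"
  shows "ramsey_arrows N' k E"
proof -
  have "mono_copy N col c k E \<Longrightarrow> mono_copy N' col c k E" for col c
    unfolding mono_copy_def using assms(2) by fastforce
  then show ?thesis
    using assms(1) unfolding ramsey_arrows_def by blast
qed

lemma ord_ramsey_eqI:
  assumes "ramsey_arrows (Suc N) k E" "\<not> ramsey_arrows N k E"
  shows "ord_ramsey k E = Suc N"
  unfolding ord_ramsey_def
proof (rule Least_equality)
  show "Suc N \<le> N'" if "ramsey_arrows N' k E" for N'
    using ramsey_arrows_mono[OF that, of N] assms(2) by fastforce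
qed (fact assms(1))

theorem proposition4p2:
  fixes m n :: nat
  assumes "m \<ge> 2" and "n \<ge> 2"
  shows "ord_ramsey (m + n) {{0, m}, {m - 1, m + n - 1}} = m + n + max m n - 1"
proof -
  have "1 < m" "1 < n" using assms by simp_all
  moreover have "m + n + max m n - 1 = Suc (m + n + max m n - 2)"
    using assms by simp
  ultimately show ?thesis
    using ord_ramsey_eqI crossing_arrows not_crossing_arrows
    unfolding crossing_edges_def by metis
qed

end
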